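(* Let $M$ be an $n$-dimensional manifold with local coordinates $(u^1,\dots,u^m,v^{m+1},\dots,v^n)$, and let $L$ be an affinor on $M$ with zero Nijenhuis torsion which in these coordinates has the form $L=\begin{pmatrix}A(\mathbf u)&0\\0&B(\mathbf v)\end{pmatrix}$, where $A$ is $m\times m$ depending only on $\mathbf u=(u^1,\dots,u^m)$, $B$ depends only on $\mathbf v=(v^{m+1},\dots,v^n)$, and $\mathrm{Spec}(A)\cap\mathrm{Spec}(B)=\emptyset$. Let $g$ and $\tilde g$ be non-degenerate symmetric bivectors with $\tilde g^{ij}=L^j_kg^{ki}$, written in block form $g=\begin{pmatrix}\sigma&0\\0&\eta\end{pmatrix}$, $\tilde g=\begin{pmatrix}\tilde\sigma&0\\0&\tilde\eta\end{pmatrix}$. If the Killing condition $\nabla^i\tilde g^{kj}+\nabla^k\tilde g^{ij}+\nabla^j\tilde g^{ik}=0$ holds, then $\sigma,\tilde\sigma$ depend only on $\mathbf u$ and $\eta,\tilde\eta$ depend only on $\mathbf v$.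
   Context: $\nabla$ is the Levi-Civita connection of $g$ and $\nabla^i=g^{is}\nabla_s$. The Nijenhuis torsion of $L$ is $\mathcal N^k_{ij}=L^s_i\partial_sL^k_j-L^s_j\partial_sL^k_i+L^k_s\partial_jL^s_i-L^k_s\partial_iL^s_j$. *)

theory Defs
  imports "HOL-Analysis.Analysis"
begin

text \<open>Local coordinates: points of a coordinate domain are vectors x :: real^'n;
  the coordinate index set is the finite type 'n. A (1,1)-tensor field L is a
  matrix field with entry L x $ a $ b = L^a_b; a bivector field g has
  g x $ i $ j = g^{ij}.\<close>

definition partial :: "(real^'n \<Rightarrow> real) \<Rightarrow> 'n \<Rightarrow> real^'n \<Rightarrow> real" where
  "partial f s x = deriv (\<lambda>t. f (x + t *\<^sub>R axis s 1)) 0"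

fun Ck :: "nat \<Rightarrow> (real^'n) set \<Rightarrow> (real^'n \<Rightarrow> real) \<Rightarrow> bool" where
  "Ck 0 U f = continuous_on U f"
| "Ck (Suc k) U f = (f differentiable_on U \<and> (\<forall>s. Ck k U (partial f s)))"

definition smooth_fun :: "(real^'n) set \<Rightarrow> (real^'n \<Rightarrow> real) \<Rightarrow> bool" where
  "smooth_fun U f = (\<forall>k. Ck k U f)"

definition smooth_field :: "(real^'n) set \<Rightarrow> (real^'n \<Rightarrow> real^'n^'n) \<Rightarrow> bool" where
  "smooth_field U T = (\<forall>i j. smooth_fun U (\<lambda>x. T x $ i $ j))"

definition nijenhuis :: "(real^'n \<Rightarrow> real^'n^'n) \<Rightarrow> real^'n \<Rightarrow> 'n \<Rightarrow> 'n \<Rightarrow> 'n \<Rightarrow> real" where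
  "nijenhuis L x k i j = (\<Sum>s\<in>UNIV.
      L x $ s $ i * partial (\<lambda>y. L y $ k $ j) s x
    - L x $ s $ j * partial (\<lambda>y. L y $ k $ i) s x
    + L x $ k $ s * partial (\<lambda>y. L y $ s $ i) j x
    - L x $ k $ s * partial (\<lambda>y. L y $ s $ j) i x)"

definition lower :: "(real^'n \<Rightarrow> real^'n^'n) \<Rightarrow> real^'n \<Rightarrow> real^'n^'n" where
  "lower g x = matrix_inv (g x)"

definition christoffel :: "(real^'n \<Rightarrow> real^'n^'n) \<Rightarrow> 'n \<Rightarrow> 'n \<Rightarrow> 'n \<Rightarrow> real^'n \<Rightarrow> real" where
  "christoffel g k i j x = (1/2) * (\<Sum>l\<in>UNIV. g x $ k $ l *
      (partial (\<lambda>y. lower g y $ l $ j) i x + partial (\<lambda>y. lower g y $ l $ i) j x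
       - partial (\<lambda>y. lower g y $ i $ j) l x))"

definition covd :: "(real^'n \<Rightarrow> real^'n^'n) \<Rightarrow> (real^'n \<Rightarrow> real^'n^'n) \<Rightarrow> 'n \<Rightarrow> 'n \<Rightarrow> 'n \<Rightarrow> real^'n \<Rightarrow> real" where
  "covd g T s k j x = partial (\<lambda>y. T y $ k $ j) s x
     + (\<Sum>l\<in>UNIV. christoffel g k s l x * T x $ l $ j + christoffel g j s l x * T x $ k $ l)"

definition covd_up :: "(real^'n \<Rightarrow> real^'n^'n) \<Rightarrow> (real^'n \<Rightarrow> real^'n^'n) \<Rightarrow> 'n \<Rightarrow> 'n \<Rightarrow> 'n \<Rightarrow> real^'n \<Rightarrow> real" where
  "covd_up g T i k j x = (\<Sum>s\<in>UNIV. g x $ i $ s * covd g T s k j x)"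

definition block_eigenvalue :: "real^'n^'n \<Rightarrow> 'n set \<Rightarrow> complex \<Rightarrow> bool" where
  "block_eigenvalue M I c = (\<exists>w :: 'n \<Rightarrow> complex. (\<exists>i\<in>I. w i \<noteq> 0) \<and>
      (\<forall>i\<in>I. (\<Sum>j\<in>I. complex_of_real (M $ i $ j) * w j) = c * w i))"

end

theory Submission
  imports Defs "HOL-Complex_Analysis.Cauchy_Integral_Formula"
begin

text \<open>
  At a point, the Killing equation with one index in the \<open>v\<close>-block and two in the
  \<open>u\<close>-block, together with \<open>\<partial>\<^sub>v A = 0\<close> and \<open>g\<tilde> = L g\<close>, says that for each fixed
  \<open>a\<close> the matrix \<open>Z\<^sub>i\<^sub>s = \<partial>\<^sub>s \<sigma>\<^sup>i\<^sup>a\<close> (\<open>i\<close> a \<open>u\<close>-index, \<open>s\<close> a \<open>v\<close>-index) solves the Sylvester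
  equation \<open>A Z = Z B\<close>. As \<open>A\<close> and \<open>B\<close> have no common eigenvalue, \<open>Z = 0\<close>: the
  resolvents \<open>(z - A)\<^sup>-\<^sup>1 Z = Z (z - B)\<^sup>-\<^sup>1\<close> glue to an entire function vanishing at
  infinity, which is zero by Liouville. Hence \<open>\<sigma>\<close>, and then \<open>\<sigma>\<tilde> = A \<sigma>\<close>, do not depend on
  \<open>v\<close>; exchanging the roles of the two blocks gives the claim for \<open>\<eta>\<close> and \<open>\<eta>\<tilde>\<close>.
\<close>

lemma matrix_inv_det_nz:
  fixes A :: "'a::field^'n^'n"
  assumes "det A \<noteq> 0"
  shows "A ** matrix_inv A = mat 1" "matrix_inv A ** A = mat 1"
proof -
  have "\<exists>A'. A ** A' = mat 1 \<and> A' ** A = mat 1"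
    using invertible_det_nz assms unfolding invertible_def by blast
  then have "A ** matrix_inv A = mat 1 \<and> matrix_inv A ** A = mat 1"
    unfolding matrix_inv_def by (rule someI_ex)
  then show "A ** matrix_inv A = mat 1" "matrix_inv A ** A = mat 1" by auto
qed

lemma matrix_inv_cramer:
  fixes A :: "'a::field^'n^'n"
  assumes "det A \<noteq> 0"
  shows "matrix_inv A $ i $ j = det (\<chi> p q. if q = i then axis j 1 $ p else A $ p $ q) / det A"
proof -
  have "A *v (matrix_inv A *v axis j 1) = axis j 1"
    using matrix_inv_det_nz[OF assms] by (simp add: matrix_vector_mul_assoc)
  then have "matrix_inv A *v axis j 1 = (\<chi> k. det (\<chi> p q. if q = k then axis j 1 $ p else A $ p $ q) / det A)"
    by (subst (asm) cramer[OF assms])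
  moreover have "(matrix_inv A *v axis j 1) $ i = matrix_inv A $ i $ j"
    unfolding matrix_vector_mult_def axis_def by (simp add: if_distrib[of "(*) _"] cong: if_cong)
  ultimately show ?thesis by simp
qed

lemma symmetric_matrix_inv:
  fixes A :: "'a::field^'n^'n"
  assumes "transpose A = A" "det A \<noteq> 0"
  shows "transpose (matrix_inv A) = matrix_inv A"
proof -
  define B where "B = matrix_inv A"
  have AB: "A ** B = mat 1" "B ** A = mat 1" using matrix_inv_det_nz[OF assms(2)] by (auto simp: B_def)
  have BtA: "transpose B ** A = mat 1"
    using matrix_transpose_mul[of A B] AB(1) assms(1) by simp
  have "transpose B = transpose B ** (A ** B)" using AB by simp
  also have "\<dots> = B" by (simp add: matrix_mul_assoc BtA)
  finally show ?thesis unfolding B_def .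
qed

lemma symmetric_matrix_entry:
  assumes "transpose A = A"
  shows "A $ i $ j = A $ j $ i"
proof -
  have "transpose A $ j $ i = A $ j $ i" using assms by simp
  then show ?thesis by (simp add: transpose_def)
qed

lemma matrix_inv_intertwine:
  fixes A B Z :: "'a::field^'n^'n"
  assumes "A ** Z = Z ** B" "det A \<noteq> 0" "det B \<noteq> 0"
  shows "matrix_inv A ** Z = Z ** matrix_inv B"
proof -
  have "matrix_inv A ** Z = matrix_inv A ** Z ** (B ** matrix_inv B)"
    using matrix_inv_det_nz(1)[OF assms(3)] by (simp add: matrix_mul_rid)
  also have "\<dots> = matrix_inv A ** (A ** Z) ** matrix_inv B"
    by (simp add: matrix_mul_assoc assms(1))
  also have "\<dots> = (matrix_inv A ** A) ** Z ** matrix_inv B"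
    by (simp add: matrix_mul_assoc)
  also have "\<dots> = Z ** matrix_inv B"
    using matrix_inv_det_nz(2)[OF assms(2)] by simp
  finally show ?thesis .
qed

lemma det_eq_0_imp_kernel:
  fixes A :: "'a::field^'n^'n"
  assumes "det A = 0"
  obtains v where "v \<noteq> 0" "A *v v = 0"
proof -
  have "\<not> inj ((*v) A)"
    using det_nz_iff_inj_gen[OF matrix_vector_mul_linear_gen[of A]] assms
    by (simp add: matrix_of_matrix_vector_mul)
  then obtain x y where "x \<noteq> y" "A *v x = A *v y" unfolding inj_def by blast
  then show ?thesis
    by (intro that[of "x - y"]) (simp_all add: matrix_vector_mult_diff_distrib)
qed

section \<open>Sylvester equations with disjoint spectra\<close>

lemma holomorphic_on_det:
  fixes f :: "complex \<Rightarrow> complex^'n^'n"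
  assumes "\<And>i j. (\<lambda>z. f z $ i $ j) holomorphic_on S"
  shows "(\<lambda>z. det (f z)) holomorphic_on S"
  unfolding det_def by (intro holomorphic_intros assms)

lemma holomorphic_on_matrix_inv_entry:
  fixes f :: "complex \<Rightarrow> complex^'n^'n"
  assumes hol: "\<And>i j. (\<lambda>z. f z $ i $ j) holomorphic_on S"
    and nz: "\<And>z. z \<in> S \<Longrightarrow> det (f z) \<noteq> 0"
  shows "(\<lambda>z. matrix_inv (f z) $ i $ j) holomorphic_on S"
proof -
  have "(\<lambda>z. (\<chi> p q. if q = i then axis j 1 $ p else f z $ p $ q) $ p $ q) holomorphic_on S" for p q
    using hol by (cases "q = i") simp_all
  then have "(\<lambda>z. det (\<chi> p q. if q = i then axis j 1 $ p else f z $ p $ q) / det (f z)) holomorphic_on S"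
    by (intro holomorphic_on_divide holomorphic_on_det hol nz)
  then show ?thesis
    by (rule holomorphic_transform) (simp add: matrix_inv_cramer nz)
qed

lemma holomorphic_on_glue:
  assumes "f holomorphic_on A" "g holomorphic_on B" "open A" "open B" "A \<union> B = UNIV"
    and "\<And>z. z \<in> A \<Longrightarrow> z \<in> B \<Longrightarrow> f z = g z"
  shows "(\<lambda>z. if z \<in> A then f z else g z) holomorphic_on UNIV"
proof -
  have "(\<lambda>z. if z \<in> A then f z else g z) holomorphic_on A"
    using assms(1) by (rule holomorphic_transform) simp
  moreover have "(\<lambda>z. if z \<in> A then f z else g z) holomorphic_on B"
    using assms(2) by (rule holomorphic_transform) (simp add: assms(6))
  ultimately show ?thesis
    using holomorphic_on_Un[OF _ _ assms(3,4)] assms(5) by metis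
qed

lemma entire_decaying_eq_0:
  fixes F :: "complex \<Rightarrow> complex"
  assumes hol: "F holomorphic_on UNIV"
    and decay: "\<And>z. cmod z > K \<Longrightarrow> cmod (F z) * (cmod z - K) \<le> Y"
  shows "F z = 0"
proof (rule Liouville_weak_0[OF hol])
  show "(F \<longlongrightarrow> 0) at_infinity"
    unfolding Lim_at_infinity
  proof (intro allI impI)
    fix e :: real assume e: "e > 0"
    show "\<exists>r. \<forall>z. r \<le> norm z \<longrightarrow> dist (F z) 0 < e"
    proof (intro exI allI impI)
      fix z :: complex assume z: "K + 1 + \<bar>Y\<bar> / e \<le> norm z"
      have pos: "cmod z - K > 0" using z e by (smt (verit) divide_nonneg_pos)
      have "\<bar>Y\<bar> / e < cmod z - K" using z by simp
      then have "\<bar>Y\<bar> < e * (cmod z - K)" using e by (simp add: divide_less_eq mult.commute)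
      then have "cmod (F z) * (cmod z - K) < e * (cmod z - K)"
        using decay[of z] pos by linarith
      then show "dist (F z) 0 < e" using pos by simp
    qed
  qed
qed

definition cmatrix :: "real^'n^'m \<Rightarrow> complex^'n^'m" where
  "cmatrix M = (\<chi> i j. complex_of_real (M $ i $ j))"

definition block_char_matrix :: "'n set \<Rightarrow> real^'n^'n \<Rightarrow> complex \<Rightarrow> complex^'n^'n" where
  "block_char_matrix I M z = (\<chi> i j.
     if i \<in> I \<and> j \<in> I then (if i = j then z else 0) - complex_of_real (M $ i $ j)
     else if i = j then 1 else 0)"

definition abs_entry_sum :: "real^'n^'m \<Rightarrow> real" where
  "abs_entry_sum M = (\<Sum>i\<in>UNIV. \<Sum>j\<in>UNIV. \<bar>M $ i $ j\<bar>)"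

lemma cmatrix_mult: "cmatrix (A ** B) = cmatrix A ** cmatrix B"
  by (simp add: vec_eq_iff cmatrix_def matrix_matrix_mult_def)

lemma cmatrix_eq_0_iff: "cmatrix A = 0 \<longleftrightarrow> A = 0"
  by (simp add: vec_eq_iff cmatrix_def)

lemma sum_indicator_mult:
  fixes f :: "'n::finite \<Rightarrow> 'a::semiring_1"
  shows "(\<Sum>j\<in>UNIV. (if i = j then 1 else 0) * f j) = f i"
  by (simp add: if_distrib[of "\<lambda>c. c * _"] cong: if_cong)

lemma block_char_matrix_mult_vec:
  "(block_char_matrix I M z *v v) $ i =
     (if i \<in> I then z * v $ i - (\<Sum>j\<in>I. complex_of_real (M $ i $ j) * v $ j) else v $ i)"
proof (cases "i \<in> I")
  case True
  have "(block_char_matrix I M z *v v) $ i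
      = (\<Sum>j\<in>UNIV. if j \<in> I then (if i = j then z * v $ j else 0) - complex_of_real (M $ i $ j) * v $ j else 0)"
    unfolding matrix_vector_mult_def block_char_matrix_def using True
    by (auto intro!: sum.cong simp: left_diff_distrib)
  also have "\<dots> = (\<Sum>j\<in>I. (if i = j then z * v $ j else 0) - complex_of_real (M $ i $ j) * v $ j)"
    by (simp add: sum.If_cases)
  also have "\<dots> = z * v $ i - (\<Sum>j\<in>I. complex_of_real (M $ i $ j) * v $ j)"
    using True by (simp add: sum_subtractf)
  finally show ?thesis using True by simp
next
  case False
  then have "(block_char_matrix I M z *v v) $ i = (\<Sum>j\<in>UNIV. (if i = j then 1 else 0) * v $ j)"
    unfolding matrix_vector_mult_def block_char_matrix_def vec_lambda_beta by (intro sum.cong) auto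
  then show ?thesis using False by (simp add: sum_indicator_mult)
qed

lemma det_block_char_matrix_eq_0_imp_eigenvalue:
  assumes "det (block_char_matrix I M z) = 0"
  shows "block_eigenvalue M I z"
proof -
  obtain v where v: "v \<noteq> 0" "block_char_matrix I M z *v v = 0"
    using det_eq_0_imp_kernel[OF assms] by blast
  have row: "(block_char_matrix I M z *v v) $ i = 0" for i
    using v(2) by simp
  have "v $ i = 0" if "i \<notin> I" for i
    using row[of i] that by (simp add: block_char_matrix_mult_vec)
  moreover obtain i where "v $ i \<noteq> 0" using v(1) by (metis vec_eq_iff zero_index)
  ultimately have "\<exists>i\<in>I. v $ i \<noteq> 0" by blast
  moreover have "(\<Sum>j\<in>I. complex_of_real (M $ i $ j) * v $ j) = z * v $ i" if "i \<in> I" for i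
    using row[of i] that by (simp add: block_char_matrix_mult_vec)
  ultimately show ?thesis
    unfolding block_eigenvalue_def by (intro exI[of _ "\<lambda>i. v $ i"]) auto
qed

lemma abs_entry_sum_nonneg: "0 \<le> abs_entry_sum M"
  unfolding abs_entry_sum_def by (auto intro!: sum_nonneg)

lemma row_abs_sum_le_abs_entry_sum: "(\<Sum>j\<in>J. \<bar>M $ i $ j\<bar>) \<le> abs_entry_sum M"
proof -
  have "(\<Sum>j\<in>J. \<bar>M $ i $ j\<bar>) \<le> (\<Sum>j\<in>UNIV. \<bar>M $ i $ j\<bar>)"
    by (rule sum_mono2) auto
  also have "\<dots> \<le> abs_entry_sum M" unfolding abs_entry_sum_def
    by (rule member_le_sum) (auto intro: sum_nonneg)
  finally show ?thesis .
qed

lemma norm_block_row_le: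
  assumes "\<And>j. j \<in> I \<Longrightarrow> cmod (w j) \<le> m" "0 \<le> m"
  shows "cmod (\<Sum>j\<in>I. complex_of_real (M $ i $ j) * w j) \<le> abs_entry_sum M * m"
proof -
  have "cmod (\<Sum>j\<in>I. complex_of_real (M $ i $ j) * w j) \<le> (\<Sum>j\<in>I. \<bar>M $ i $ j\<bar> * m)"
    by (rule order_trans[OF norm_sum]) (auto intro!: sum_mono mult_left_mono assms simp: norm_mult)
  also have "\<dots> = (\<Sum>j\<in>I. \<bar>M $ i $ j\<bar>) * m" by (simp add: sum_distrib_right)
  also have "\<dots> \<le> abs_entry_sum M * m"
    using assms(2) by (intro mult_right_mono row_abs_sum_le_abs_entry_sum)
  finally show ?thesis .
qed

lemma block_eigenvalue_norm_le:
  assumes "block_eigenvalue M I z"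
  shows "cmod z \<le> abs_entry_sum M"
proof -
  obtain w where w: "\<exists>i\<in>I. w i \<noteq> 0"
    and eig: "\<forall>i\<in>I. (\<Sum>j\<in>I. complex_of_real (M $ i $ j) * w j) = z * w i"
    using assms unfolding block_eigenvalue_def by blast
  define m where "m = Max ((\<lambda>i. cmod (w i)) ` I)"
  have le: "cmod (w j) \<le> m" if "j \<in> I" for j
    unfolding m_def using that by (intro Max_ge) auto
  have "m \<in> (\<lambda>i. cmod (w i)) ` I" unfolding m_def using w by (intro Max_in) auto
  then obtain i0 where i0: "i0 \<in> I" "cmod (w i0) = m" by blast
  have "m > 0" using w le by (metis norm_le_zero_iff not_less order_trans)
  moreover have "cmod z * m \<le> abs_entry_sum M * m"
    using norm_block_row_le[of I w m M i0] eig i0 le \<open>m > 0\<close> by (simp add: norm_mult)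
  ultimately show ?thesis by simp
qed

lemma det_block_char_matrix_nonzero:
  "cmod z > abs_entry_sum M \<Longrightarrow> det (block_char_matrix I M z) \<noteq> 0"
  using block_eigenvalue_norm_le det_block_char_matrix_eq_0_imp_eigenvalue by fastforce

lemma block_char_matrix_solution_bound:
  assumes z: "cmod z > abs_entry_sum M"
    and x: "block_char_matrix I M z *v x = y" and y: "\<And>i. i \<notin> I \<Longrightarrow> y $ i = 0"
  shows "cmod (x $ b) * (cmod z - abs_entry_sum M) \<le> (\<Sum>i\<in>UNIV. cmod (y $ i))"
proof -
  have row: "y $ i = (if i \<in> I then z * x $ i - (\<Sum>j\<in>I. complex_of_real (M $ i $ j) * x $ j) else x $ i)" for i
    using x block_char_matrix_mult_vec by metis
  define m where "m = Max (range (\<lambda>i. cmod (x $ i)))"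
  have le: "cmod (x $ j) \<le> m" for j
    unfolding m_def by (intro Max_ge) auto
  have "m \<in> range (\<lambda>i. cmod (x $ i))" unfolding m_def by (intro Max_in) auto
  then obtain i0 where i0: "cmod (x $ i0) = m" by blast
  have y_le: "cmod (y $ i) \<le> (\<Sum>i\<in>UNIV. cmod (y $ i))" for i
    by (rule member_le_sum) auto
  have "m * (cmod z - abs_entry_sum M) \<le> (\<Sum>i\<in>UNIV. cmod (y $ i))"
  proof (cases "i0 \<in> I")
    case False
    then have "m = 0" using row[of i0] y i0 by auto
    then show ?thesis by (auto intro: sum_nonneg)
  next
    case True
    then have "z * x $ i0 = y $ i0 + (\<Sum>j\<in>I. complex_of_real (M $ i0 $ j) * x $ j)"
      using row[of i0] by simp
    then have "cmod z * m \<le> cmod (y $ i0) + cmod (\<Sum>j\<in>I. complex_of_real (M $ i0 $ j) * x $ j)"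
      using i0 by (metis norm_mult norm_triangle_ineq)
    also have "\<dots> \<le> cmod (y $ i0) + abs_entry_sum M * m"
      using norm_block_row_le[of I "\<lambda>j. x $ j" m] le order_trans[OF norm_ge_zero le]
      by (intro add_left_mono) blast
    finally show ?thesis using y_le[of i0] by (simp add: algebra_simps)
  qed
  moreover have "cmod (x $ b) * (cmod z - abs_entry_sum M) \<le> m * (cmod z - abs_entry_sum M)"
    using z le by (intro mult_right_mono) auto
  ultimately show ?thesis by linarith
qed

lemma block_char_matrix_resolvent_bound:
  fixes Z :: "complex^'n^'n"
  assumes z: "cmod z > abs_entry_sum M"
    and supp: "\<forall>i j. \<not> (i \<in> I \<and> j \<notin> I) \<longrightarrow> Z $ i $ j = 0"
  shows "cmod ((matrix_inv (block_char_matrix I M z) ** Z) $ b $ s) * (cmod z - abs_entry_sum M)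
    \<le> (\<Sum>i\<in>UNIV. cmod (Z $ i $ s))"
proof -
  let ?x = "matrix_inv (block_char_matrix I M z) *v column s Z"
  have "block_char_matrix I M z *v ?x = column s Z"
    using det_block_char_matrix_nonzero[OF z]
    by (simp add: matrix_vector_mul_assoc matrix_inv_det_nz(1))
  moreover have "column s Z $ i = 0" if "i \<notin> I" for i
    using supp that by (simp add: column_def)
  ultimately have "cmod (?x $ b) * (cmod z - abs_entry_sum M) \<le> (\<Sum>i\<in>UNIV. cmod (column s Z $ i))"
    by (rule block_char_matrix_solution_bound[OF z])
  then show ?thesis
    by (simp add: matrix_matrix_mult_def matrix_vector_mult_def column_def)
qed

lemma holomorphic_on_block_char_matrix_entry:
  "(\<lambda>z. block_char_matrix I M z $ i $ j) holomorphic_on S"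
  unfolding block_char_matrix_def by (cases "i \<in> I \<and> j \<in> I"; cases "i = j") (auto intro!: holomorphic_intros)

lemma block_char_matrix_mult_offblock:
  fixes Z :: "complex^'n^'n"
  assumes block: "\<forall>i j. (i \<in> I \<longleftrightarrow> j \<notin> I) \<longrightarrow> M $ i $ j = 0"
    and supp: "\<forall>i j. \<not> (i \<in> I \<and> j \<notin> I) \<longrightarrow> Z $ i $ j = 0"
  shows "block_char_matrix I M z ** Z = (\<chi> i j. z * Z $ i $ j) - cmatrix M ** Z"
    and "Z ** block_char_matrix (- I) M z = (\<chi> i j. z * Z $ i $ j) - Z ** cmatrix M"
proof -
  have "(block_char_matrix I M z ** Z) $ i $ j
      = (\<Sum>k\<in>UNIV. (if i = k then 1 else 0) * (z * Z $ k $ j) - cmatrix M $ i $ k * Z $ k $ j)" for i j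
    unfolding matrix_matrix_mult_def block_char_matrix_def cmatrix_def vec_lambda_beta
    by (intro sum.cong refl) (use block supp in \<open>auto simp: algebra_simps\<close>)
  then show "block_char_matrix I M z ** Z = (\<chi> i j. z * Z $ i $ j) - cmatrix M ** Z"
    by (simp add: vec_eq_iff sum_subtractf sum_indicator_mult matrix_matrix_mult_def)
  have "(Z ** block_char_matrix (- I) M z) $ i $ j
      = (\<Sum>k\<in>UNIV. (if j = k then 1 else 0) * (z * Z $ i $ k) - Z $ i $ k * cmatrix M $ k $ j)" for i j
    unfolding matrix_matrix_mult_def block_char_matrix_def cmatrix_def vec_lambda_beta
    by (intro sum.cong refl) (use block supp in \<open>auto simp: algebra_simps\<close>)
  then show "Z ** block_char_matrix (- I) M z = (\<chi> i j. z * Z $ i $ j) - Z ** cmatrix M"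
    by (simp add: vec_eq_iff sum_subtractf sum_indicator_mult matrix_matrix_mult_def)
qed

lemma sylvester_disjoint_spectra:
  fixes M :: "real^'n^'n" and Z :: "complex^'n^'n"
  assumes block: "\<forall>i j. (i \<in> I \<longleftrightarrow> j \<notin> I) \<longrightarrow> M $ i $ j = 0"
    and spec: "\<forall>c. \<not> (block_eigenvalue M I c \<and> block_eigenvalue M (- I) c)"
    and supp: "\<forall>i j. \<not> (i \<in> I \<and> j \<notin> I) \<longrightarrow> Z $ i $ j = 0"
    and comm: "cmatrix M ** Z = Z ** cmatrix M"
  shows "Z = 0"
proof -
  let ?A = "block_char_matrix I M" and ?B = "block_char_matrix (- I) M"
  define SA where "SA = {z. det (?A z) \<noteq> 0}"
  define SB where "SB = {z. det (?B z) \<noteq> 0}"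
  have "open SA" "open SB"
    unfolding SA_def SB_def
    by (auto intro!: open_Collect_neq holomorphic_on_imp_continuous_on holomorphic_on_det
        holomorphic_on_block_char_matrix_entry)
  have cover: "SA \<union> SB = UNIV"
    using spec det_block_char_matrix_eq_0_imp_eigenvalue unfolding SA_def SB_def by blast
  have large_in_SA: "z \<in> SA" if "cmod z > abs_entry_sum M" for z
    using det_block_char_matrix_nonzero[OF that] unfolding SA_def by blast
  have intertwine: "?A z ** Z = Z ** ?B z" for z
    using block_char_matrix_mult_offblock[OF block supp, of z] comm by simp
  have resolvents_agree: "matrix_inv (?A z) ** Z = Z ** matrix_inv (?B z)" if "z \<in> SA" "z \<in> SB" for z
    using matrix_inv_intertwine[OF intertwine] that by (simp add: SA_def SB_def)
  have resolvent_entry_eq_0: "(matrix_inv (?A z) ** Z) $ b $ s = 0" if "z \<in> SA" for z b s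
  proof -
    define F where "F z = (if z \<in> SA then (matrix_inv (?A z) ** Z) $ b $ s
      else (Z ** matrix_inv (?B z)) $ b $ s)" for z
    have "F holomorphic_on UNIV"
      unfolding F_def
    proof (rule holomorphic_on_glue[OF _ _ \<open>open SA\<close> \<open>open SB\<close> cover])
      show "(\<lambda>z. (matrix_inv (?A z) ** Z) $ b $ s) holomorphic_on SA"
        unfolding matrix_matrix_mult_def vec_lambda_beta
        by (intro holomorphic_intros holomorphic_on_matrix_inv_entry
            holomorphic_on_block_char_matrix_entry) (auto simp: SA_def)
      show "(\<lambda>z. (Z ** matrix_inv (?B z)) $ b $ s) holomorphic_on SB"
        unfolding matrix_matrix_mult_def vec_lambda_beta
        by (intro holomorphic_intros holomorphic_on_matrix_inv_entry
            holomorphic_on_block_char_matrix_entry) (auto simp: SB_def)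
    qed (simp add: resolvents_agree)
    moreover have "cmod (F z) * (cmod z - abs_entry_sum M) \<le> (\<Sum>i\<in>UNIV. cmod (Z $ i $ s))"
      if "cmod z > abs_entry_sum M" for z
      using block_char_matrix_resolvent_bound[OF that supp] large_in_SA[OF that] by (simp add: F_def)
    ultimately have "F z = 0" by (rule entire_decaying_eq_0)
    then show ?thesis using that by (simp add: F_def)
  qed
  define z0 where "z0 = complex_of_real (abs_entry_sum M + 1)"
  have "z0 \<in> SA"
    using abs_entry_sum_nonneg[of M] by (intro large_in_SA) (simp add: z0_def)
  then have "?A z0 ** (matrix_inv (?A z0) ** Z) = Z"
    by (simp add: SA_def matrix_mul_assoc matrix_inv_det_nz(1))
  moreover have "matrix_inv (?A z0) ** Z = 0"
    using resolvent_entry_eq_0[OF \<open>z0 \<in> SA\<close>] by (simp add: vec_eq_iff)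
  ultimately show ?thesis by simp
qed

lemma sylvester_disjoint_spectra_real:
  fixes M Z :: "real^'n^'n"
  assumes "\<forall>i j. (i \<in> I \<longleftrightarrow> j \<notin> I) \<longrightarrow> M $ i $ j = 0"
    and "\<forall>c. \<not> (block_eigenvalue M I c \<and> block_eigenvalue M (- I) c)"
    and "\<forall>i j. \<not> (i \<in> I \<and> j \<notin> I) \<longrightarrow> Z $ i $ j = 0"
    and "M ** Z = Z ** M"
  shows "Z = 0"
proof -
  have "cmatrix M ** cmatrix Z = cmatrix Z ** cmatrix M"
    using assms(4) by (simp add: cmatrix_mult[symmetric])
  then have "cmatrix Z = 0"
    using assms(1-3) by (intro sylvester_disjoint_spectra[of I M]) (auto simp: cmatrix_def)
  then show ?thesis by (simp add: cmatrix_eq_0_iff)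
qed

lemma intertwined_offblock_eq_0:
  fixes L :: "real^'n^'n" and D :: "'n \<Rightarrow> 'n \<Rightarrow> real"
  assumes L_block: "\<forall>i j. (i \<in> I \<longleftrightarrow> j \<notin> I) \<longrightarrow> L $ i $ j = 0"
    and spec: "\<forall>c. \<not> (block_eigenvalue L I c \<and> block_eigenvalue L (- I) c)"
    and intertwined: "\<And>i s. i \<in> I \<Longrightarrow> s \<notin> I \<Longrightarrow>
       (\<Sum>k\<in>UNIV. L $ i $ k * D s k) = (\<Sum>l\<in>UNIV. L $ l $ s * D l i)"
    and "i \<in> I" "s \<notin> I"
  shows "D s i = 0"
proof -
  define Z :: "real^'n^'n" where "Z = (\<chi> i s. if i \<in> I \<and> s \<notin> I then D s i else 0)"
  have "(L ** Z) $ i $ s = (Z ** L) $ i $ s" for i s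
  proof (cases "i \<in> I \<and> s \<notin> I")
    case True
    have "(L ** Z) $ i $ s = (\<Sum>k\<in>UNIV. L $ i $ k * D s k)"
      unfolding matrix_matrix_mult_def Z_def vec_lambda_beta by (intro sum.cong) (use True L_block in auto)
    moreover have "(Z ** L) $ i $ s = (\<Sum>l\<in>UNIV. L $ l $ s * D l i)"
      unfolding matrix_matrix_mult_def Z_def vec_lambda_beta by (intro sum.cong) (use True L_block in auto)
    ultimately show ?thesis using intertwined True by simp
  next
    case False
    then have "(L ** Z) $ i $ s = 0" "(Z ** L) $ i $ s = 0"
      unfolding matrix_matrix_mult_def Z_def by (auto intro!: sum.neutral simp: L_block)
    then show ?thesis by simp
  qed
  then have "L ** Z = Z ** L" by (simp add: vec_eq_iff)
  then have "Z = 0"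
    using L_block spec by (intro sylvester_disjoint_spectra_real[of I L]) (auto simp: Z_def)
  then have "Z $ i $ s = 0" by simp
  then show ?thesis using assms(4,5) by (simp add: Z_def)
qed

section \<open>Coordinate partial derivatives\<close>

lemma differentiable_prod:
  fixes f :: "'i \<Rightarrow> 'a::real_normed_vector \<Rightarrow> 'b::real_normed_field"
  shows "finite A \<Longrightarrow> (\<And>a. a \<in> A \<Longrightarrow> f a differentiable at t)
    \<Longrightarrow> (\<lambda>x. \<Prod>a\<in>A. f a x) differentiable at t"
proof (induction A rule: finite_induct)
  case (insert a A)
  then show ?case by (simp add: prod.insert)
qed simp

lemma differentiable_det:
  fixes F :: "'a::real_normed_vector \<Rightarrow> real^'m^'m"
  assumes "\<And>i j. (\<lambda>t. F t $ i $ j) differentiable at t"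
  shows "(\<lambda>t. det (F t)) differentiable at t"
  unfolding det_def
  by (intro differentiable_sum ballI differentiable_mult differentiable_const differentiable_prod assms) auto

definition has_partial_derivative :: "(real^'n \<Rightarrow> real) \<Rightarrow> 'n \<Rightarrow> real^'n \<Rightarrow> real \<Rightarrow> bool" where
  "has_partial_derivative f s x d \<longleftrightarrow> ((\<lambda>t. f (x + t *\<^sub>R axis s 1)) has_real_derivative d) (at 0)"

definition partially_differentiable :: "(real^'n \<Rightarrow> real) \<Rightarrow> 'n \<Rightarrow> real^'n \<Rightarrow> bool" where
  "partially_differentiable f s x \<longleftrightarrow> (\<lambda>t. f (x + t *\<^sub>R axis s 1)) differentiable (at 0)"

lemma has_partial_derivative_imp_partial: "has_partial_derivative f s x d \<Longrightarrow> partial f s x = d"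
  unfolding has_partial_derivative_def partial_def by (rule DERIV_imp_deriv)

lemma has_partial_derivative_unique:
  "has_partial_derivative f s x d1 \<Longrightarrow> has_partial_derivative f s x d2 \<Longrightarrow> d1 = d2"
  unfolding has_partial_derivative_def by (rule DERIV_unique)

lemma partially_differentiable_iff:
  "partially_differentiable f s x \<longleftrightarrow> has_partial_derivative f s x (partial f s x)"
  unfolding partially_differentiable_def has_partial_derivative_def partial_def
  by (simp add: DERIV_deriv_iff_real_differentiable)

lemma has_partial_derivative_imp_partially_differentiable:
  "has_partial_derivative f s x d \<Longrightarrow> partially_differentiable f s x"
  unfolding partially_differentiable_def has_partial_derivative_def using real_differentiable_def by blast

lemma open_coordinate_line_preimage:
  fixes x :: "real^'n"
  assumes "open U"
  shows "open {t::real. x + t *\<^sub>R axis s 1 \<in> U}"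
proof -
  have "continuous_on UNIV (\<lambda>t::real. x + t *\<^sub>R axis s 1)"
    by (intro continuous_intros)
  then show ?thesis
    using open_vimage[OF assms] by (simp add: vimage_def)
qed

lemma has_partial_derivative_transform_open:
  assumes "open U" "x \<in> U" "\<And>y. y \<in> U \<Longrightarrow> f y = h y" "has_partial_derivative f s x d"
  shows "has_partial_derivative h s x d"
  using assms(4) unfolding has_partial_derivative_def
  by (rule has_field_derivative_transform_within_open[OF _ open_coordinate_line_preimage[OF assms(1)]])
    (use assms in auto)

lemma partial_cong_open:
  assumes "open U" "x \<in> U" "\<And>y. y \<in> U \<Longrightarrow> f y = h y"
  shows "partial f s x = partial h s x"
proof -
  have "has_partial_derivative f s x d \<longleftrightarrow> has_partial_derivative h s x d" for d
    using has_partial_derivative_transform_open[OF assms(1,2)] assms(3) by metis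
  then show ?thesis unfolding partial_def deriv_def has_partial_derivative_def by simp
qed

lemma partial_eq_0_open:
  assumes "open U" "x \<in> U" "\<And>y. y \<in> U \<Longrightarrow> f y = 0"
  shows "partial f s x = 0"
proof -
  have "partial (\<lambda>y. 0) s x = 0"
    by (rule has_partial_derivative_imp_partial) (simp add: has_partial_derivative_def)
  then show ?thesis using partial_cong_open[OF assms(1,2), of f "\<lambda>y. 0"] assms(3) by simp
qed

lemma smooth_fun_partially_differentiable:
  assumes "open U" "x \<in> U" "smooth_fun U f"
  shows "partially_differentiable f s x"
proof -
  have "f differentiable_on U" using assms(3) unfolding smooth_fun_def using Ck.simps(2) by blast
  then have "f differentiable (at x)" using assms(1,2) differentiable_on_eq_differentiable_at by blast
  moreover have "((\<lambda>t::real. x + t *\<^sub>R axis s 1) has_derivative (\<lambda>t. t *\<^sub>R axis s 1)) (at 0)"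
    by (intro derivative_eq_intros) auto
  then have "(\<lambda>t::real. x + t *\<^sub>R axis s 1) differentiable (at 0)"
    by (rule differentiableI)
  ultimately have "(f \<circ> (\<lambda>t::real. x + t *\<^sub>R axis s 1)) differentiable (at 0)"
    by (intro differentiable_chain_at) simp_all
  then show ?thesis unfolding partially_differentiable_def o_def .
qed

lemma smooth_field_partially_differentiable:
  assumes "open U" "x \<in> U" "smooth_field U g"
  shows "partially_differentiable (\<lambda>y. g y $ i $ j) s x"
  using assms unfolding smooth_field_def by (blast intro: smooth_fun_partially_differentiable)

lemma partially_differentiable_transform_open:
  assumes "open U" "x \<in> U" "\<And>y. y \<in> U \<Longrightarrow> f y = h y" "partially_differentiable f s x"
  shows "partially_differentiable h s x"
proof -
  have "has_partial_derivative f s x (partial f s x)"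
    using assms(4) partially_differentiable_iff by blast
  then show ?thesis
    by (intro has_partial_derivative_imp_partially_differentiable
        has_partial_derivative_transform_open[OF assms(1-3)])
qed

lemma partially_differentiable_divide:
  "partially_differentiable f s x \<Longrightarrow> partially_differentiable h s x \<Longrightarrow> h x \<noteq> 0
    \<Longrightarrow> partially_differentiable (\<lambda>y. f y / h y) s x"
  unfolding partially_differentiable_def by (rule differentiable_divide) auto

lemma has_partial_derivative_sum_mult:
  assumes "\<And>k. has_partial_derivative (f k) s x (df k)" "\<And>k. has_partial_derivative (h k) s x (dh k)"
  shows "has_partial_derivative (\<lambda>y. \<Sum>k\<in>(UNIV::'m::finite set). f k y * h k y) s x
           (\<Sum>k\<in>UNIV. df k * h k x + f k x * dh k)"
proof -
  have "((\<lambda>t. f k (x + t *\<^sub>R axis s 1) * h k (x + t *\<^sub>R axis s 1))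
      has_real_derivative df k * h k x + f k x * dh k) (at 0)" for k
    using DERIV_mult[OF assms[unfolded has_partial_derivative_def]] by (simp add: mult.commute)
  then show ?thesis unfolding has_partial_derivative_def by (auto intro: DERIV_sum)
qed

lemma partially_differentiable_lower:
  assumes U_open: "open U" and x: "x \<in> U" and g_smooth: "smooth_field U g"
    and g_nondeg: "\<forall>y\<in>U. det (g y) \<noteq> 0"
  shows "partially_differentiable (\<lambda>y. lower g y $ i $ j) s x"
proof -
  note g_diff = smooth_field_partially_differentiable[OF U_open x g_smooth, unfolded partially_differentiable_def]
  have "partially_differentiable (\<lambda>y. det (\<chi> p q. if q = i then axis j 1 $ p else g y $ p $ q) / det (g y)) s x"
  proof (rule partially_differentiable_divide)
    show "partially_differentiable (\<lambda>y. det (\<chi> p q. if q = i then axis j 1 $ p else g y $ p $ q)) s x"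
      unfolding partially_differentiable_def
    proof (rule differentiable_det)
      show "(\<lambda>t. (\<chi> p q. if q = i then axis j 1 $ p else g (x + t *\<^sub>R axis s 1) $ p $ q) $ p $ q)
          differentiable at 0" for p q
        using g_diff by (cases "q = i") simp_all
    qed
    show "partially_differentiable (\<lambda>y. det (g y)) s x"
      unfolding partially_differentiable_def by (rule differentiable_det) (rule g_diff)
    show "det (g x) \<noteq> 0" using g_nondeg x by blast
  qed
  then show ?thesis
    by (rule partially_differentiable_transform_open[OF U_open x, rotated])
      (simp add: lower_def matrix_inv_cramer g_nondeg)
qed

lemma partial_lower_sym:
  assumes U_open: "open U" and x: "x \<in> U"
    and g_sym: "\<forall>y\<in>U. transpose (g y) = g y" and g_nondeg: "\<forall>y\<in>U. det (g y) \<noteq> 0"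
  shows "partial (\<lambda>y. lower g y $ i $ j) s x = partial (\<lambda>y. lower g y $ j $ i) s x"
proof (rule partial_cong_open[OF U_open x])
  fix y assume "y \<in> U"
  then have "transpose (lower g y) = lower g y"
    using symmetric_matrix_inv g_sym g_nondeg unfolding lower_def by blast
  then show "lower g y $ i $ j = lower g y $ j $ i"
    by (rule symmetric_matrix_entry)
qed

lemma partial_lower:
  assumes U_open: "open U" and x: "x \<in> U" and g_smooth: "smooth_field U g"
    and g_nondeg: "\<forall>y\<in>U. det (g y) \<noteq> 0"
  shows "(\<Sum>m\<in>UNIV. g x $ k $ m * partial (\<lambda>y. lower g y $ m $ j) s x)
       = - (\<Sum>m\<in>UNIV. partial (\<lambda>y. g y $ k $ m) s x * lower g x $ m $ j)"
proof -
  have "has_partial_derivative (\<lambda>y. \<Sum>m\<in>UNIV. g y $ k $ m * lower g y $ m $ j) s x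
      (\<Sum>m\<in>UNIV. partial (\<lambda>y. g y $ k $ m) s x * lower g x $ m $ j
                 + g x $ k $ m * partial (\<lambda>y. lower g y $ m $ j) s x)"
    using smooth_field_partially_differentiable[OF U_open x g_smooth]
      partially_differentiable_lower[OF assms]
    by (intro has_partial_derivative_sum_mult) (simp_all add: partially_differentiable_iff)
  moreover have "has_partial_derivative (\<lambda>y. \<Sum>m\<in>UNIV. g y $ k $ m * lower g y $ m $ j) s x 0"
  proof (rule has_partial_derivative_transform_open[OF U_open x])
    show "has_partial_derivative (\<lambda>y. if k = j then 1 else 0) s x 0"
      by (simp add: has_partial_derivative_def)
    show "(if k = j then 1 else 0) = (\<Sum>m\<in>UNIV. g y $ k $ m * lower g y $ m $ j)" if "y \<in> U" for y
      using arg_cong[OF matrix_inv_det_nz(1)[of "g y"], of "\<lambda>A. A $ k $ j"] g_nondeg that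
      by (simp add: lower_def mat_def matrix_matrix_mult_def)
  qed
  ultimately have "(\<Sum>m\<in>UNIV. partial (\<lambda>y. g y $ k $ m) s x * lower g x $ m $ j
                 + g x $ k $ m * partial (\<lambda>y. lower g y $ m $ j) s x) = 0"
    by (rule has_partial_derivative_unique)
  then show ?thesis by (simp add: sum.distrib eq_neg_iff_add_eq_0 add.commute)
qed

section \<open>The Killing equation in coordinates\<close>

text \<open>Metric compatibility \<open>\<nabla>\<^sub>l g\<^sup>k\<^sup>i = 0\<close> of the Levi-Civita connection, written with arrays:
  \<open>G\<close> is the inverse (lower-index) metric, \<open>dg\<close> and \<open>dG\<close> hold the partial derivatives, and
  \<open>dG_dg\<close> is the derivative of \<open>g G = 1\<close>.\<close>
lemma christoffel_metric_compat:
  fixes g G :: "'n::finite \<Rightarrow> 'n \<Rightarrow> real" and dg dG :: "'n \<Rightarrow> 'n \<Rightarrow> 'n \<Rightarrow> real"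
  assumes g_sym: "\<And>i j. g i j = g j i"
    and dG_sym: "\<And>l i j. dG l i j = dG l j i"
    and G_inverse: "\<And>m i. (\<Sum>s\<in>UNIV. G m s * g s i) = (if m = i then 1 else 0)"
    and dG_dg: "\<And>l k s. (\<Sum>m\<in>UNIV. g k m * dG l m s) = - (\<Sum>m\<in>UNIV. dg l k m * G m s)"
  defines "\<Gamma> \<equiv> \<lambda>k i j. 1/2 * (\<Sum>l\<in>UNIV. g k l * (dG i l j + dG j l i - dG l i j))"
  shows "(\<Sum>s\<in>UNIV. g i s * \<Gamma> k s l) + (\<Sum>s\<in>UNIV. g k s * \<Gamma> i s l) = - dg l k i"
proof -
  have first: "(\<Sum>s\<in>UNIV. g i s * \<Gamma> k s l)
      = (\<Sum>s\<in>UNIV. \<Sum>m\<in>UNIV. 1/2 * (g i s * g k m * (dG s m l + dG l m s - dG m s l)))"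
    unfolding \<Gamma>_def by (simp add: sum_distrib_left mult.assoc mult.left_commute)
  have second: "(\<Sum>s\<in>UNIV. g k s * \<Gamma> i s l)
      = (\<Sum>s\<in>UNIV. \<Sum>m\<in>UNIV. 1/2 * (g k m * g i s * (dG m s l + dG l s m - dG s m l)))"
    unfolding \<Gamma>_def by (subst sum.swap) (simp add: sum_distrib_left mult.assoc mult.left_commute)
  have "(\<Sum>s\<in>UNIV. g i s * \<Gamma> k s l) + (\<Sum>s\<in>UNIV. g k s * \<Gamma> i s l)
      = (\<Sum>s\<in>UNIV. \<Sum>m\<in>UNIV. g i s * (g k m * dG l m s))"
    unfolding first second sum.distrib[symmetric] by (intro sum.cong refl) (simp add: dG_sym[of l] algebra_simps)
  also have "\<dots> = (\<Sum>s\<in>UNIV. g i s * (- (\<Sum>m\<in>UNIV. dg l k m * G m s)))"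
    by (simp add: sum_distrib_left[symmetric] dG_dg)
  also have "\<dots> = - (\<Sum>m\<in>UNIV. \<Sum>s\<in>UNIV. dg l k m * (G m s * g s i))"
    by (subst sum.swap) (simp add: sum_distrib_left sum_negf g_sym[of i] mult_ac)
  also have "\<dots> = - (\<Sum>m\<in>UNIV. dg l k m * (\<Sum>s\<in>UNIV. G m s * g s i))"
    by (simp add: sum_distrib_left)
  also have "\<dots> = - dg l k i"
    by (simp add: G_inverse if_distrib[of "(*) _"] cong: if_cong)
  finally show ?thesis .
qed

lemma killing_sum_expansion:
  fixes g G T :: "'n::finite \<Rightarrow> 'n \<Rightarrow> real" and dg dG dT :: "'n \<Rightarrow> 'n \<Rightarrow> 'n \<Rightarrow> real"
  assumes g_sym: "\<And>i j. g i j = g j i"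
    and T_sym: "\<And>i j. T i j = T j i"
    and dG_sym: "\<And>l i j. dG l i j = dG l j i"
    and G_inverse: "\<And>m i. (\<Sum>s\<in>UNIV. G m s * g s i) = (if m = i then 1 else 0)"
    and dG_dg: "\<And>l k s. (\<Sum>m\<in>UNIV. g k m * dG l m s) = - (\<Sum>m\<in>UNIV. dg l k m * G m s)"
  defines "\<Gamma> \<equiv> \<lambda>k i j. 1/2 * (\<Sum>l\<in>UNIV. g k l * (dG i l j + dG j l i - dG l i j))"
  defines "cov \<equiv> \<lambda>s k j. dT s k j + (\<Sum>l\<in>UNIV. \<Gamma> k s l * T l j + \<Gamma> j s l * T k l)"
  defines "cov_up \<equiv> \<lambda>i k j. \<Sum>s\<in>UNIV. g i s * cov s k j"
  shows "cov_up i k j + cov_up k i j + cov_up j i k =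
     (\<Sum>s\<in>UNIV. g i s * dT s k j + g k s * dT s i j + g j s * dT s i k)
   - (\<Sum>l\<in>UNIV. T l j * dg l k i + T l k * dg l j i + T i l * dg l j k)"
proof -
  define A where "A i k l = (\<Sum>s\<in>UNIV. g i s * \<Gamma> k s l)" for i k l
  have A_swap: "A k i l = - dg l k i - A i k l" for i k l
    using christoffel_metric_compat[of g dG G dg i k l, OF g_sym dG_sym G_inverse dG_dg]
    unfolding A_def \<Gamma>_def by simp
  have cov_up_eq: "cov_up i k j
      = (\<Sum>s\<in>UNIV. g i s * dT s k j) + (\<Sum>l\<in>UNIV. T l j * A i k l + T k l * A i j l)" for i k j
  proof -
    have "cov_up i k j = (\<Sum>s\<in>UNIV. g i s * dT s k j)
        + (\<Sum>s\<in>UNIV. \<Sum>l\<in>UNIV. g i s * \<Gamma> k s l * T l j + g i s * \<Gamma> j s l * T k l)"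
      unfolding cov_up_def cov_def by (simp add: distrib_left sum.distrib sum_distrib_left mult.assoc)
    also have "(\<Sum>s\<in>UNIV. \<Sum>l\<in>UNIV. g i s * \<Gamma> k s l * T l j + g i s * \<Gamma> j s l * T k l)
        = (\<Sum>l\<in>UNIV. T l j * A i k l + T k l * A i j l)"
      unfolding A_def by (subst sum.swap) (simp add: sum.distrib sum_distrib_left mult_ac)
    finally show ?thesis .
  qed
  have "cov_up i k j + cov_up k i j + cov_up j i k
      = (\<Sum>s\<in>UNIV. g i s * dT s k j + g k s * dT s i j + g j s * dT s i k)
      + (\<Sum>l\<in>UNIV. (T l j * A i k l + T k l * A i j l) + (T l j * A k i l + T i l * A k j l)
          + (T l k * A j i l + T i l * A j k l))"
    unfolding cov_up_eq sum.distrib by (simp add: add_ac)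
  also have "\<dots> = (\<Sum>s\<in>UNIV. g i s * dT s k j + g k s * dT s i j + g j s * dT s i k)
      + (\<Sum>l\<in>UNIV. - (T l j * dg l k i + T l k * dg l j i + T i l * dg l j k))"
    unfolding A_swap[of k i] A_swap[of j i] A_swap[of j k] T_sym[of k]
    by (simp add: algebra_simps)
  finally show ?thesis unfolding sum_negf by simp
qed

lemma killing_sum_partials:
  assumes U_open: "open U" and x: "x \<in> U" and g_smooth: "smooth_field U g"
    and g_sym: "\<forall>y\<in>U. transpose (g y) = g y" and g_nondeg: "\<forall>y\<in>U. det (g y) \<noteq> 0"
    and gt_sym: "transpose (gt x) = gt x"
  shows "covd_up g gt i k j x + covd_up g gt k i j x + covd_up g gt j i k x
    = (\<Sum>s\<in>UNIV. g x $ i $ s * partial (\<lambda>y. gt y $ k $ j) s x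
        + g x $ k $ s * partial (\<lambda>y. gt y $ i $ j) s x + g x $ j $ s * partial (\<lambda>y. gt y $ i $ k) s x)
    - (\<Sum>l\<in>UNIV. gt x $ l $ j * partial (\<lambda>y. g y $ k $ i) l x
        + gt x $ l $ k * partial (\<lambda>y. g y $ j $ i) l x + gt x $ i $ l * partial (\<lambda>y. g y $ j $ k) l x)"
proof -
  have g_sym_x: "g x $ a $ b = g x $ b $ a" for a b
    using g_sym x by (simp add: symmetric_matrix_entry)
  have gt_sym_x: "gt x $ a $ b = gt x $ b $ a" for a b
    using gt_sym by (rule symmetric_matrix_entry)
  have lower_inverse: "(\<Sum>s\<in>UNIV. lower g x $ m $ s * g x $ s $ a) = (if m = a then 1 else 0)" for m a
    using arg_cong[OF matrix_inv_det_nz(2)[of "g x"], of "\<lambda>A. A $ m $ a"] g_nondeg x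
    by (simp add: lower_def matrix_matrix_mult_def mat_def)
  show ?thesis
    using killing_sum_expansion[where g = "\<lambda>a b. g x $ a $ b" and G = "\<lambda>a b. lower g x $ a $ b"
        and T = "\<lambda>a b. gt x $ a $ b" and dg = "\<lambda>l a b. partial (\<lambda>y. g y $ a $ b) l x"
        and dG = "\<lambda>l a b. partial (\<lambda>y. lower g y $ a $ b) l x"
        and dT = "\<lambda>l a b. partial (\<lambda>y. gt y $ a $ b) l x",
        OF g_sym_x gt_sym_x partial_lower_sym[OF U_open x g_sym g_nondeg] lower_inverse
        partial_lower[OF U_open x g_smooth g_nondeg]]
    unfolding covd_up_def covd_def christoffel_def by simp
qed

lemma killing_offblock_intertwining:
  fixes g T L :: "real^'n^'n" and dg dT :: "'n \<Rightarrow> 'n \<Rightarrow> 'n \<Rightarrow> real"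
  assumes killing: "\<And>i k j. (\<Sum>s\<in>UNIV. g $ i $ s * dT s k j + g $ k $ s * dT s i j + g $ j $ s * dT s i k)
      = (\<Sum>l\<in>UNIV. T $ l $ j * dg l k i + T $ l $ k * dg l j i + T $ i $ l * dg l j k)"
    and g_sym: "transpose g = g" and g_nondeg: "det g \<noteq> 0"
    and T_def: "\<And>i j. T $ i $ j = (\<Sum>k\<in>UNIV. L $ j $ k * g $ k $ i)"
    and g_block: "\<And>i j. (i \<in> I \<longleftrightarrow> j \<notin> I) \<Longrightarrow> g $ i $ j = 0"
    and dg_block: "\<And>l i j. (i \<in> I \<longleftrightarrow> j \<notin> I) \<Longrightarrow> dg l i j = 0"
    and dT_block: "\<And>l i j. (i \<in> I \<longleftrightarrow> j \<notin> I) \<Longrightarrow> dT l i j = 0"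
    and dT_offblock: "\<And>s a b. s \<notin> I \<Longrightarrow> b \<in> I \<Longrightarrow> dT s a b = (\<Sum>k\<in>UNIV. L $ b $ k * dg s k a)"
    and ab: "a \<in> I" "b \<in> I" and s: "s \<notin> I"
  shows "(\<Sum>k\<in>UNIV. L $ b $ k * dg s k a) = (\<Sum>l\<in>UNIV. L $ l $ s * dg l b a)"
proof -
  define W where "W = (\<chi> t. if t \<in> I then 0
    else (\<Sum>k\<in>UNIV. L $ b $ k * dg t k a) - (\<Sum>l\<in>UNIV. L $ l $ t * dg l b a))"
  have g_W: "(g *v W) $ r = 0" for r
  proof (cases "r \<in> I")
    case True
    then show ?thesis
      unfolding matrix_vector_mult_def W_def by (auto intro!: sum.neutral simp: g_block)
  next
    case False
    \<comment> \<open>In the Killing equation at \<open>(r, a, b)\<close> the block structure kills all terms but two.\<close>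
    have "(\<Sum>t\<in>UNIV. g $ r $ t * dT t a b) = (\<Sum>l\<in>UNIV. T $ r $ l * dg l b a)"
      using killing[of r a b] False ab by (simp add: dT_block dg_block)
    also have "\<dots> = (\<Sum>t\<in>UNIV. g $ r $ t * (\<Sum>l\<in>UNIV. L $ l $ t * dg l b a))"
    proof -
      have "g $ r $ t = g $ t $ r" for t
        using g_sym by (rule symmetric_matrix_entry)
      then show ?thesis
        unfolding T_def sum_distrib_left sum_distrib_right
        by (subst sum.swap) (simp add: mult_ac)
    qed
    finally have "(\<Sum>t\<in>UNIV. g $ r $ t * (dT t a b - (\<Sum>l\<in>UNIV. L $ l $ t * dg l b a))) = 0"
      by (simp add: right_diff_distrib sum_subtractf)
    moreover have W_term: "g $ r $ t * W $ t = g $ r $ t * (dT t a b - (\<Sum>l\<in>UNIV. L $ l $ t * dg l b a))" for t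
      using False ab by (cases "t \<in> I") (simp_all add: W_def g_block dT_offblock)
    ultimately show ?thesis by (simp only: matrix_vector_mult_def vec_lambda_beta W_term)
  qed
  have "inj ((*v) g)"
    using g_nondeg invertible_det_nz inj_matrix_vector_mult by blast
  moreover have "g *v W = g *v 0"
    using g_W by (simp add: vec_eq_iff)
  ultimately have "W = 0" by (rule injD)
  then have "W $ s = 0" by simp
  then show ?thesis using s by (simp add: W_def)
qed

lemma partial_gt_offblock:
  assumes U_open: "open U" and x: "x \<in> U"
    and L_smooth: "smooth_field U L" and g_smooth: "smooth_field U g"
    and gt_def: "\<forall>y\<in>U. \<forall>i j. gt y $ i $ j = (\<Sum>k\<in>UNIV. L y $ j $ k * g y $ k $ i)"
    and L_block: "\<forall>y\<in>U. \<forall>i j. (i \<in> I \<longleftrightarrow> j \<notin> I) \<longrightarrow> L y $ i $ j = 0"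
    and A_I: "\<forall>y\<in>U. \<forall>i\<in>I. \<forall>j\<in>I. \<forall>s. s \<notin> I \<longrightarrow> partial (\<lambda>y. L y $ i $ j) s y = 0"
    and "s \<notin> I" "b \<in> I"
  shows "partial (\<lambda>y. gt y $ a $ b) s x = (\<Sum>k\<in>UNIV. L x $ b $ k * partial (\<lambda>y. g y $ k $ a) s x)"
proof -
  have dL: "partial (\<lambda>y. L y $ b $ k) s x = 0" for k
  proof (cases "k \<in> I")
    case True then show ?thesis using A_I x assms(8,9) by blast
  next
    case False then show ?thesis
      by (intro partial_eq_0_open[OF U_open x]) (use L_block assms(9) in auto)
  qed
  have "has_partial_derivative (\<lambda>y. \<Sum>k\<in>UNIV. L y $ b $ k * g y $ k $ a) s x
      (\<Sum>k\<in>UNIV. partial (\<lambda>y. L y $ b $ k) s x * g x $ k $ a + L x $ b $ k * partial (\<lambda>y. g y $ k $ a) s x)"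
    using smooth_field_partially_differentiable[OF U_open x] L_smooth g_smooth
    by (intro has_partial_derivative_sum_mult) (simp_all add: partially_differentiable_iff)
  then have "has_partial_derivative (\<lambda>y. \<Sum>k\<in>UNIV. L y $ b $ k * g y $ k $ a) s x
      (\<Sum>k\<in>UNIV. L x $ b $ k * partial (\<lambda>y. g y $ k $ a) s x)"
    by (simp add: dL)
  then have "has_partial_derivative (\<lambda>y. gt y $ a $ b) s x
      (\<Sum>k\<in>UNIV. L x $ b $ k * partial (\<lambda>y. g y $ k $ a) s x)"
    by (rule has_partial_derivative_transform_open[OF U_open x, rotated]) (simp add: gt_def)
  then show ?thesis by (rule has_partial_derivative_imp_partial)
qed

lemma killing_offblock_partial_eq_0:
  fixes U :: "(real^'n) set" and I :: "'n set" and L g gt :: "real^'n \<Rightarrow> real^'n^'n"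
  assumes U_open: "open U"
    and L_smooth: "smooth_field U L" and g_smooth: "smooth_field U g"
    and L_block: "\<forall>x\<in>U. \<forall>i j. (i \<in> I \<longleftrightarrow> j \<notin> I) \<longrightarrow> L x $ i $ j = 0"
    and A_I: "\<forall>x\<in>U. \<forall>i\<in>I. \<forall>j\<in>I. \<forall>s. s \<notin> I \<longrightarrow> partial (\<lambda>y. L y $ i $ j) s x = 0"
    and spec_disj: "\<forall>x\<in>U. \<forall>c. \<not> (block_eigenvalue (L x) I c \<and> block_eigenvalue (L x) (- I) c)"
    and g_sym: "\<forall>x\<in>U. transpose (g x) = g x" and g_nondeg: "\<forall>x\<in>U. det (g x) \<noteq> 0"
    and gt_def: "\<forall>x\<in>U. \<forall>i j. gt x $ i $ j = (\<Sum>k\<in>UNIV. L x $ j $ k * g x $ k $ i)"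
    and gt_sym: "\<forall>x\<in>U. transpose (gt x) = gt x"
    and g_block: "\<forall>x\<in>U. \<forall>i j. (i \<in> I \<longleftrightarrow> j \<notin> I) \<longrightarrow> g x $ i $ j = 0"
    and gt_block: "\<forall>x\<in>U. \<forall>i j. (i \<in> I \<longleftrightarrow> j \<notin> I) \<longrightarrow> gt x $ i $ j = 0"
    and killing: "\<forall>x\<in>U. \<forall>i k j.
       covd_up g gt i k j x + covd_up g gt k i j x + covd_up g gt j i k x = 0"
    and x: "x \<in> U" and ij: "i \<in> I" "j \<in> I" and s: "s \<notin> I"
  shows "partial (\<lambda>y. g y $ i $ j) s x = 0 \<and> partial (\<lambda>y. gt y $ i $ j) s x = 0"
proof -
  define dg where "dg l a b = partial (\<lambda>y. g y $ a $ b) l x" for l a b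
  define dT where "dT l a b = partial (\<lambda>y. gt y $ a $ b) l x" for l a b
  have dg_block: "dg l a b = 0" if "a \<in> I \<longleftrightarrow> b \<notin> I" for l a b
    unfolding dg_def by (rule partial_eq_0_open[OF U_open x]) (use g_block that in auto)
  have dT_block: "dT l a b = 0" if "a \<in> I \<longleftrightarrow> b \<notin> I" for l a b
    unfolding dT_def by (rule partial_eq_0_open[OF U_open x]) (use gt_block that in auto)
  have dT_offblock: "dT s a b = (\<Sum>k\<in>UNIV. L x $ b $ k * dg s k a)" if "s \<notin> I" "b \<in> I" for s a b
    unfolding dT_def dg_def
    using partial_gt_offblock[OF U_open x L_smooth g_smooth gt_def L_block A_I that] .
  have intertwined: "(\<Sum>k\<in>UNIV. L x $ b $ k * dg s k a) = (\<Sum>l\<in>UNIV. L x $ l $ s * dg l b a)"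
    if "a \<in> I" "b \<in> I" "s \<notin> I" for a b s
  proof (rule killing_offblock_intertwining[where T = "gt x" and dT = dT, OF _ _ _ _ _ dg_block dT_block
        dT_offblock that])
    show "(\<Sum>s\<in>UNIV. g x $ i $ s * dT s k j + g x $ k $ s * dT s i j + g x $ j $ s * dT s i k)
        = (\<Sum>l\<in>UNIV. gt x $ l $ j * dg l k i + gt x $ l $ k * dg l j i + gt x $ i $ l * dg l j k)"
      for i k j
      using killing_sum_partials[OF U_open x g_smooth g_sym g_nondeg, of gt i k j] killing gt_sym x
      unfolding dg_def dT_def by simp
  qed (use g_sym g_nondeg gt_def g_block x in auto)
  have dg_offblock: "dg s b a = 0" if "a \<in> I" "b \<in> I" "s \<notin> I" for a b s
    by (rule intertwined_offblock_eq_0[where D = "\<lambda>s k. dg s k a"])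
      (use L_block spec_disj x intertwined that in auto)
  have "dT s i j = (\<Sum>k\<in>UNIV. L x $ j $ k * dg s k i)"
    using dT_offblock[OF s ij(2)] .
  also have "\<dots> = 0"
    using dg_offblock[OF ij(1) _ s] L_block x ij(2) by (intro sum.neutral) (metis mult_eq_0_iff)
  finally show ?thesis using dg_offblock[OF ij(2,1) s] unfolding dg_def dT_def by simp
qed

theorem lemma2:
  fixes U :: "(real^'n) set" and Iu :: "'n set"
    and L g gt :: "real^'n \<Rightarrow> real^'n^'n"
  assumes U_open: "open U"
    and L_smooth: "smooth_field U L" and g_smooth: "smooth_field U g"
    and N_zero: "\<forall>x\<in>U. \<forall>k i j. nijenhuis L x k i j = 0"
    and L_block: "\<forall>x\<in>U. \<forall>i j. (i \<in> Iu \<longleftrightarrow> j \<notin> Iu) \<longrightarrow> L x $ i $ j = 0"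
    and A_u: "\<forall>x\<in>U. \<forall>i\<in>Iu. \<forall>j\<in>Iu. \<forall>s. s \<notin> Iu \<longrightarrow> partial (\<lambda>y. L y $ i $ j) s x = 0"
    and B_v: "\<forall>x\<in>U. \<forall>i j s. i \<notin> Iu \<longrightarrow> j \<notin> Iu \<longrightarrow> s \<in> Iu \<longrightarrow> partial (\<lambda>y. L y $ i $ j) s x = 0"
    and spec_disj: "\<forall>x\<in>U. \<forall>c. \<not> (block_eigenvalue (L x) Iu c \<and> block_eigenvalue (L x) (- Iu) c)"
    and g_sym: "\<forall>x\<in>U. transpose (g x) = g x" and g_nondeg: "\<forall>x\<in>U. det (g x) \<noteq> 0"
    and gt_def: "\<forall>x\<in>U. \<forall>i j. gt x $ i $ j = (\<Sum>k\<in>UNIV. L x $ j $ k * g x $ k $ i)"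
    and gt_sym: "\<forall>x\<in>U. transpose (gt x) = gt x" and gt_nondeg: "\<forall>x\<in>U. det (gt x) \<noteq> 0"
    and g_block: "\<forall>x\<in>U. \<forall>i j. (i \<in> Iu \<longleftrightarrow> j \<notin> Iu) \<longrightarrow> g x $ i $ j = 0"
    and gt_block: "\<forall>x\<in>U. \<forall>i j. (i \<in> Iu \<longleftrightarrow> j \<notin> Iu) \<longrightarrow> gt x $ i $ j = 0"
    and killing: "\<forall>x\<in>U. \<forall>i k j.
       covd_up g gt i k j x + covd_up g gt k i j x + covd_up g gt j i k x = 0"
  shows "\<forall>x\<in>U. (\<forall>i\<in>Iu. \<forall>j\<in>Iu. \<forall>s. s \<notin> Iu \<longrightarrow>
              partial (\<lambda>y. g y $ i $ j) s x = 0 \<and> partial (\<lambda>y. gt y $ i $ j) s x = 0)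
          \<and> (\<forall>i j s. i \<notin> Iu \<longrightarrow> j \<notin> Iu \<longrightarrow> s \<in> Iu \<longrightarrow>
              partial (\<lambda>y. g y $ i $ j) s x = 0 \<and> partial (\<lambda>y. gt y $ i $ j) s x = 0)"
proof (rule ballI, rule conjI)
  fix x assume x: "x \<in> U"
  show "\<forall>i\<in>Iu. \<forall>j\<in>Iu. \<forall>s. s \<notin> Iu \<longrightarrow>
      partial (\<lambda>y. g y $ i $ j) s x = 0 \<and> partial (\<lambda>y. gt y $ i $ j) s x = 0"
    using killing_offblock_partial_eq_0[OF U_open L_smooth g_smooth L_block A_u spec_disj g_sym
        g_nondeg gt_def gt_sym g_block gt_block killing x] by blast
  show "\<forall>i j s. i \<notin> Iu \<longrightarrow> j \<notin> Iu \<longrightarrow> s \<in> Iu \<longrightarrow>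
      partial (\<lambda>y. g y $ i $ j) s x = 0 \<and> partial (\<lambda>y. gt y $ i $ j) s x = 0"
  proof (intro allI impI)
    fix i j s assume ijs: "i \<notin> Iu" "j \<notin> Iu" "s \<in> Iu"
    show "partial (\<lambda>y. g y $ i $ j) s x = 0 \<and> partial (\<lambda>y. gt y $ i $ j) s x = 0"
      by (rule killing_offblock_partial_eq_0[where I = "- Iu", OF U_open L_smooth g_smooth _ _ _
            g_sym g_nondeg gt_def gt_sym _ _ killing x])
        (use L_block B_v spec_disj g_block gt_block ijs in auto)
  qed
qed

end
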